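(* Define $y'\in\mathbb{R}^{\mathcal F}$ by $y'_u=x_{vu}$ if $u\in G(v)$ for some (necessarily unique) $v\in P'$, and $y'_u=0$ otherwise, and let $x'$ be an optimal assignment w.r.t. $y'$ and $w'$. Then $y'\in\mathcal P$, $(x',y')$ is a feasible solution of $\textsc{FacilityMatLP}(w',\mathcal M)$, and $\mathrm{cost}_{w'}(x',y')\le T(y')\le3^pz^*$, where $z^*$ is the optimal value of $\textsc{FacilityMatLP}(w,\mathcal M)$.
   Context: Setting: $p\ge1$; a finite metric $d$ on $P\cup\mathcal F$; $f\ge0$; $w:P\to\mathbb{R}_{\ge0}$; matroid $\mathcal M$ on $\mathcal F$ with rank $r$. For demands $\omega$, $\mathrm{cost}_\omega(x,y)=\sum_u f(u)y_u+\sum_{v,u}\omega(v)d(v,u)^px_{vu}$; $\textsc{FacilityMatLP}(\omega,\mathcal M)$ minimizes it s.t. $\sum_u x_{vu}\ge1$, $\sum_{u\in S}y_u\le r(S)$ ($S\subseteq\mathcal F$), $0\le x_{vu}\le y_u$. An optimal assignment w.r.t. $\bar y$ and $\omega$ minimizes $\sum_{v,u}\omega(v)d(v,u)^px_{vu}$ over $x$ with $\sum_u x_{vu}\ge1$, $0\le x_{vu}\le\bar y_u$. $(x,y)$ is an optimal LP solution for $w$ (value $z^*$) with $\sum_u x_{vu}=1$; $\mathcal R(v)=(\sum_ud(v,u)^px_{vu})^{1/p}$. Client consolidation gives $w'$ (order clients by non-decreasing $\mathcal R$; for $i<j$, if $d(v_i,v_j)\le2^{(p+1)/p}\mathcal R(v_j)$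 and $w'(v_i)>0$, move all of $w'(v_j)$ to $v_i$); $P'=\mathrm{supp}(w')$, $|P'|\ge2$. For $v\in P'$: $F(v)$ = facilities whose nearest client in $P'$ is $v$ (ties arbitrary, a partition of $\mathcal F$); $F'(v)=\{u\in F(v):d(u,v)\le2^{1/p}\mathcal R(v)\}$; $\gamma_v=\min_{u\notin F(v)}d(v,u)$; $G(v)=\{u\in F(v):d(v,u)\le\gamma_v\}$. $T(\bar y)=\sum_uf(u)\bar y_u+\sum_{v\in P'}w'(v)\big(\sum_{u\in G(v)}d(v,u)^p\bar y_u+3^p\gamma_v^p(1-\sum_{u\in G(v)}\bar y_u)\big)$. $\mathcal P=\{\bar y\ge0:\sum_{u\in S}\bar y_u\le r(S)\ \forall S;\ \sum_{u\in F'(v)}\bar y_u\ge1/2,\ \sum_{u\in G(v)}\bar y_u\le1\ \forall v\in P'\}$. *)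

theory Defs
  imports Complex_Main
begin

definition metric_on :: "'a set \<Rightarrow> ('a \<Rightarrow> 'a \<Rightarrow> real) \<Rightarrow> bool" where
  "metric_on X d \<longleftrightarrow> finite X \<and>
     (\<forall>a\<in>X. \<forall>b\<in>X. d a b \<ge> 0 \<and> (d a b = 0 \<longleftrightarrow> a = b) \<and> d a b = d b a) \<and>
     (\<forall>a\<in>X. \<forall>b\<in>X. \<forall>c\<in>X. d a c \<le> d a b + d b c)"

definition matroid :: "'a set \<Rightarrow> ('a set \<Rightarrow> bool) \<Rightarrow> bool" where
  "matroid E indep \<longleftrightarrow> finite E \<and> indep {} \<and>
     (\<forall>A. indep A \<longrightarrow> A \<subseteq> E) \<and>
     (\<forall>A B. indep B \<and> A \<subseteq> B \<longrightarrow> indep A) \<and>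
     (\<forall>A B. indep A \<and> indep B \<and> card A < card B \<longrightarrow> (\<exists>e\<in>B - A. indep (insert e A)))"

definition mrank :: "('a set \<Rightarrow> bool) \<Rightarrow> 'a set \<Rightarrow> nat" where
  "mrank indep S = Max (card ` {I. I \<subseteq> S \<and> indep I})"

definition lp_cost :: "'a set \<Rightarrow> 'a set \<Rightarrow> ('a \<Rightarrow> real) \<Rightarrow> ('a \<Rightarrow> 'a \<Rightarrow> real) \<Rightarrow> real
    \<Rightarrow> ('a \<Rightarrow> real) \<Rightarrow> ('a \<Rightarrow> 'a \<Rightarrow> real) \<Rightarrow> ('a \<Rightarrow> real) \<Rightarrow> real" where
  "lp_cost F P f d p \<omega> x y =
     (\<Sum>u\<in>F. f u * y u) + (\<Sum>v\<in>P. \<Sum>u\<in>F. \<omega> v * d v u powr p * x v u)"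

definition lp_feasible :: "'a set \<Rightarrow> 'a set \<Rightarrow> ('a set \<Rightarrow> bool)
    \<Rightarrow> ('a \<Rightarrow> 'a \<Rightarrow> real) \<Rightarrow> ('a \<Rightarrow> real) \<Rightarrow> bool" where
  "lp_feasible F P indep x y \<longleftrightarrow>
     (\<forall>v\<in>P. (\<Sum>u\<in>F. x v u) \<ge> 1) \<and>
     (\<forall>S. S \<subseteq> F \<longrightarrow> (\<Sum>u\<in>S. y u) \<le> real (mrank indep S)) \<and>
     (\<forall>v\<in>P. \<forall>u\<in>F. 0 \<le> x v u \<and> x v u \<le> y u)"

definition assign_feasible :: "'a set \<Rightarrow> 'a set \<Rightarrow> ('a \<Rightarrow> real) \<Rightarrow> ('a \<Rightarrow> 'a \<Rightarrow> real) \<Rightarrow> bool" where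
  "assign_feasible F P yb x \<longleftrightarrow>
     (\<forall>v\<in>P. (\<Sum>u\<in>F. x v u) \<ge> 1) \<and> (\<forall>v\<in>P. \<forall>u\<in>F. 0 \<le> x v u \<and> x v u \<le> yb u)"

definition assign_cost :: "'a set \<Rightarrow> 'a set \<Rightarrow> ('a \<Rightarrow> 'a \<Rightarrow> real) \<Rightarrow> real
    \<Rightarrow> ('a \<Rightarrow> real) \<Rightarrow> ('a \<Rightarrow> 'a \<Rightarrow> real) \<Rightarrow> real" where
  "assign_cost F P d p \<omega> x = (\<Sum>v\<in>P. \<Sum>u\<in>F. \<omega> v * d v u powr p * x v u)"

definition optimal_assignment :: "'a set \<Rightarrow> 'a set \<Rightarrow> ('a \<Rightarrow> 'a \<Rightarrow> real) \<Rightarrow> real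
    \<Rightarrow> ('a \<Rightarrow> real) \<Rightarrow> ('a \<Rightarrow> real) \<Rightarrow> ('a \<Rightarrow> 'a \<Rightarrow> real) \<Rightarrow> bool" where
  "optimal_assignment F P d p yb \<omega> x \<longleftrightarrow> assign_feasible F P yb x \<and>
     (\<forall>x2. assign_feasible F P yb x2 \<longrightarrow> assign_cost F P d p \<omega> x \<le> assign_cost F P d p \<omega> x2)"

definition Rad :: "'a set \<Rightarrow> ('a \<Rightarrow> 'a \<Rightarrow> real) \<Rightarrow> real \<Rightarrow> ('a \<Rightarrow> 'a \<Rightarrow> real) \<Rightarrow> 'a \<Rightarrow> real" where
  "Rad F d p x v = (\<Sum>u\<in>F. d v u powr p * x v u) powr (1 / p)"

text \<open>Run of the consolidation on the ordered client list vs with thresholds thr: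
  the state after processing the first j clients of the list.\<close>
inductive cons_run :: "('a \<Rightarrow> 'a \<Rightarrow> real) \<Rightarrow> ('a \<Rightarrow> real) \<Rightarrow> 'a list \<Rightarrow> ('a \<Rightarrow> real)
    \<Rightarrow> nat \<Rightarrow> ('a \<Rightarrow> real) \<Rightarrow> bool"
  for d thr vs w0 where
  start: "cons_run d thr vs w0 0 w0"
| move: "\<lbrakk> cons_run d thr vs w0 j w1; j < length vs; i < j; w1 (vs ! i) > 0;
           d (vs ! i) (vs ! j) \<le> thr (vs ! j) \<rbrakk>
         \<Longrightarrow> cons_run d thr vs w0 (Suc j)
               (w1(vs ! i := w1 (vs ! i) + w1 (vs ! j), vs ! j := 0))"
| stay: "\<lbrakk> cons_run d thr vs w0 j w1; j < length vs;
           \<not> (\<exists>i<j. w1 (vs ! i) > 0 \<and> d (vs ! i) (vs ! j) \<le> thr (vs ! j)) \<rbrakk>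
         \<Longrightarrow> cons_run d thr vs w0 (Suc j) w1"

definition client_consolidation :: "'a set \<Rightarrow> 'a set \<Rightarrow> ('a \<Rightarrow> 'a \<Rightarrow> real) \<Rightarrow> real
    \<Rightarrow> ('a \<Rightarrow> 'a \<Rightarrow> real) \<Rightarrow> ('a \<Rightarrow> real) \<Rightarrow> ('a \<Rightarrow> real) \<Rightarrow> bool" where
  "client_consolidation P F d p x w w' \<longleftrightarrow>
     (\<exists>vs. distinct vs \<and> set vs = P \<and> sorted (map (Rad F d p x) vs) \<and>
        cons_run d (\<lambda>v. 2 powr ((p + 1) / p) * Rad F d p x v) vs w (length vs) w')"

definition nearest_map :: "'a set \<Rightarrow> 'a set \<Rightarrow> ('a \<Rightarrow> 'a \<Rightarrow> real) \<Rightarrow> ('a \<Rightarrow> 'a) \<Rightarrow> bool" where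
  "nearest_map F P' d near \<longleftrightarrow> (\<forall>u\<in>F. near u \<in> P' \<and> (\<forall>v\<in>P'. d u (near u) \<le> d u v))"

definition Fcl :: "'a set \<Rightarrow> ('a \<Rightarrow> 'a) \<Rightarrow> 'a \<Rightarrow> 'a set" where
  "Fcl F near v = {u\<in>F. near u = v}"

definition Fpr :: "'a set \<Rightarrow> ('a \<Rightarrow> 'a) \<Rightarrow> ('a \<Rightarrow> 'a \<Rightarrow> real) \<Rightarrow> real
    \<Rightarrow> ('a \<Rightarrow> 'a \<Rightarrow> real) \<Rightarrow> 'a \<Rightarrow> 'a set" where
  "Fpr F near d p x v = {u \<in> Fcl F near v. d u v \<le> 2 powr (1 / p) * Rad F d p x v}"

definition gam :: "'a set \<Rightarrow> ('a \<Rightarrow> 'a) \<Rightarrow> ('a \<Rightarrow> 'a \<Rightarrow> real) \<Rightarrow> 'a \<Rightarrow> real" where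
  "gam F near d v = Min (d v ` (F - Fcl F near v))"

definition Gcl :: "'a set \<Rightarrow> ('a \<Rightarrow> 'a) \<Rightarrow> ('a \<Rightarrow> 'a \<Rightarrow> real) \<Rightarrow> 'a \<Rightarrow> 'a set" where
  "Gcl F near d v = {u \<in> Fcl F near v. d v u \<le> gam F near d v}"

definition Tval :: "'a set \<Rightarrow> 'a set \<Rightarrow> ('a \<Rightarrow> real) \<Rightarrow> ('a \<Rightarrow> 'a \<Rightarrow> real) \<Rightarrow> real
    \<Rightarrow> ('a \<Rightarrow> real) \<Rightarrow> ('a \<Rightarrow> 'a) \<Rightarrow> ('a \<Rightarrow> real) \<Rightarrow> real" where
  "Tval F P' f d p w' near yb =
     (\<Sum>u\<in>F. f u * yb u) +
     (\<Sum>v\<in>P'. w' v * ((\<Sum>u\<in>Gcl F near d v. d v u powr p * yb u)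
        + 3 powr p * gam F near d v powr p * (1 - (\<Sum>u\<in>Gcl F near d v. yb u))))"

definition polyP :: "'a set \<Rightarrow> 'a set \<Rightarrow> ('a set \<Rightarrow> bool) \<Rightarrow> ('a \<Rightarrow> 'a \<Rightarrow> real) \<Rightarrow> real
    \<Rightarrow> ('a \<Rightarrow> 'a \<Rightarrow> real) \<Rightarrow> ('a \<Rightarrow> 'a) \<Rightarrow> ('a \<Rightarrow> real) \<Rightarrow> bool" where
  "polyP F P' indep d p x near yb \<longleftrightarrow>
     (\<forall>u\<in>F. yb u \<ge> 0) \<and>
     (\<forall>S. S \<subseteq> F \<longrightarrow> (\<Sum>u\<in>S. yb u) \<le> real (mrank indep S)) \<and>
     (\<forall>v\<in>P'. (\<Sum>u\<in>Fpr F near d p x v. yb u) \<ge> 1 / 2 \<and> (\<Sum>u\<in>Gcl F near d v. yb u) \<le> 1)"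

end

theory Submission
  imports Defs
begin

(* Consolidation leaves the surviving clients P' pairwise more than 2^((p+1)/p) R apart, so
   every facility within 2^(1/p) R(v) of v lies in v's own cluster and gamma_v > 2^(1/p) R(v).
   By Markov's inequality the core F'(v) therefore carries at least half of v's fractional
   assignment, and F'(v) is contained in G(v); hence keeping the openings x_vu on G(v) gives a
   point y' of the polytope. A client v tops up the part of its demand missing from G(v) in the
   core F'(v') of the cluster v' containing a facility at distance gamma_v from v: that core
   lies within distance 3 gamma_v of v and has opening at least 1/2, so the optimal assignment
   costs at most T(y'). Facilities outside G(v) are at distance at least gamma_v from v, so
   T(y') <= 3^p sum w'(v) R(v)^p, and consolidation only moves demand to clients of smaller R,
   whence T(y') <= 3^p z*. *)

lemma cons_run_nonneg:
  assumes "cons_run d thr vs w0 j w1" "\<forall>v\<in>set vs. 0 \<le> w0 v"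
  shows "\<forall>v\<in>set vs. 0 \<le> w1 v"
  using assms by (induction rule: cons_run.induct) auto

lemma cons_run_separated:
  assumes "cons_run d thr vs w0 j w1" "distinct vs"
    and "i < k" "k < j" "0 < w1 (vs ! i)" "0 < w1 (vs ! k)"
  shows "thr (vs ! k) < d (vs ! i) (vs ! k)"
  using assms
proof (induction arbitrary: i k rule: cons_run.induct)
  case start
  then show ?case by simp
next
  case (move j w1 m)
  have "k \<noteq> j"
    using move.prems move.hyps(2) by (auto simp: nth_eq_iff_index_eq)
  then have "k < j" using move.prems by simp
  then have "vs ! k \<noteq> vs ! j" "vs ! i \<noteq> vs ! j"
    using move.prems move.hyps(2) by (auto simp: nth_eq_iff_index_eq)
  with move.prems move.hyps(4) \<open>k < j\<close> show ?case
    by (intro move.IH) (auto split: if_splits)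
next
  case (stay j w1)
  then show ?case by (cases "k = j") (auto simp: not_le less_Suc_eq)
qed

lemma cons_run_weighted_sum_le:
  fixes g :: "'a \<Rightarrow> real"
  assumes "cons_run d thr vs w0 j w1" "distinct vs" "\<forall>v\<in>set vs. 0 \<le> w0 v"
    and g_mono: "\<And>i k. i < k \<Longrightarrow> k < length vs \<Longrightarrow> g (vs ! i) \<le> g (vs ! k)"
  shows "(\<Sum>v\<in>set vs. w1 v * g v) \<le> (\<Sum>v\<in>set vs. w0 v * g v)"
  using assms(1)
proof (induction rule: cons_run.induct)
  case start
  then show ?case by simp
next
  case (move j w1 i)
  define a b where "a = vs ! i" and "b = vs ! j"
  have "a \<noteq> b" "a \<in> set vs" "b \<in> set vs"
    using move.hyps assms(2) by (auto simp: a_def b_def nth_eq_iff_index_eq)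
  have "0 \<le> w1 b"
    using cons_run_nonneg[OF move.hyps(1) assms(3)] \<open>b \<in> set vs\<close> by blast
  moreover have "g a \<le> g b"
    using g_mono move.hyps by (simp add: a_def b_def)
  ultimately have "w1 b * g a \<le> w1 b * g b"
    by (simp add: mult_left_mono)
  moreover have "(\<Sum>v\<in>set vs. (w1(a := w1 a + w1 b, b := 0)) v * g v)
      = (\<Sum>v\<in>set vs. w1 v * g v) + w1 b * g a - w1 b * g b"
    using \<open>a \<noteq> b\<close> \<open>a \<in> set vs\<close> \<open>b \<in> set vs\<close>
    by (simp add: sum.remove[of "set vs" b] sum.remove[of "set vs - {b}" a] algebra_simps)
  ultimately show ?case
    using move.IH by (simp add: a_def b_def)
next
  case (stay j w1)
  then show ?case by simp
qed

lemma client_consolidation_nonneg: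
  assumes "client_consolidation P F d p x w w'" "\<forall>v\<in>P. 0 \<le> w v"
  shows "\<forall>v\<in>P. 0 \<le> w' v"
proof -
  obtain vs where "set vs = P"
    and "cons_run d (\<lambda>v. 2 powr ((p + 1) / p) * Rad F d p x v) vs w (length vs) w'"
    using assms(1) unfolding client_consolidation_def by blast
  then show ?thesis
    using cons_run_nonneg[of d _ vs w "length vs" w'] assms(2) by blast
qed

lemma client_consolidation_separated:
  assumes "client_consolidation P F d p x w w'" "\<forall>a\<in>P. \<forall>b\<in>P. d a b = d b a"
    and "v \<in> P" "v' \<in> P" "v \<noteq> v'" "0 < w' v" "0 < w' v'"
  shows "2 powr ((p + 1) / p) * Rad F d p x v < d v v'"
proof -
  let ?R = "Rad F d p x" and ?c = "2 powr ((p + 1) / p)"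
  obtain vs where vs: "distinct vs" "set vs = P" "sorted (map ?R vs)"
    and run: "cons_run d (\<lambda>v. ?c * ?R v) vs w (length vs) w'"
    using assms(1) unfolding client_consolidation_def by blast
  obtain i k where ik: "i < length vs" "vs ! i = v" "k < length vs" "vs ! k = v'"
    using assms(3,4) vs(2) by (auto simp: in_set_conv_nth)
  have R_mono: "?R (vs ! m) \<le> ?R (vs ! n)" if "m \<le> n" "n < length vs" for m n
    using sorted_nth_mono[OF vs(3)] that by simp
  show ?thesis
  proof (cases "i < k")
    case True
    then have "?c * ?R v' < d v v'"
      using cons_run_separated[OF run vs(1) True] ik assms(6,7) by simp
    moreover have "?c * ?R v \<le> ?c * ?R v'"
      using R_mono[of i k] True ik by (intro mult_left_mono) auto
    ultimately show ?thesis by linarith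
  next
    case False
    then have "k < i"
      using ik assms(5) by (cases "k < i") auto
    then have "?c * ?R v < d v' v"
      using cons_run_separated[OF run vs(1) \<open>k < i\<close> ik(1)] ik assms(6,7) by simp
    then show ?thesis
      using assms(2-4) by simp
  qed
qed

lemma client_consolidation_potential_le:
  assumes "client_consolidation P F d p x w w'" "\<forall>v\<in>P. 0 \<le> w v" "0 \<le> p"
  shows "(\<Sum>v\<in>P. w' v * Rad F d p x v powr p) \<le> (\<Sum>v\<in>P. w v * Rad F d p x v powr p)"
proof -
  let ?R = "Rad F d p x"
  obtain vs where vs: "distinct vs" "set vs = P" "sorted (map ?R vs)"
    and run: "cons_run d (\<lambda>v. 2 powr ((p + 1) / p) * ?R v) vs w (length vs) w'"
    using assms(1) unfolding client_consolidation_def by blast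
  have mono: "?R (vs ! i) powr p \<le> ?R (vs ! k) powr p" if "i < k" "k < length vs" for i k
    using sorted_nth_mono[OF vs(3), of i k] that assms(3)
    by (intro powr_mono2) (auto simp: Rad_def)
  have "(\<Sum>v\<in>set vs. w' v * ?R v powr p) \<le> (\<Sum>v\<in>set vs. w v * ?R v powr p)"
    by (rule cons_run_weighted_sum_le[OF run vs(1)]) (use assms(2) vs(2) mono in auto)
  then show ?thesis
    using vs(2) by simp
qed

lemma exists_le_weighted_average:
  fixes a x :: "'a \<Rightarrow> real"
  assumes "finite A" "\<forall>u\<in>A. 0 \<le> x u" "(\<Sum>u\<in>A. x u) = 1"
  shows "\<exists>u\<in>A. 0 < x u \<and> a u \<le> (\<Sum>u\<in>A. a u * x u)"
proof (rule ccontr)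
  define S where "S = (\<Sum>u\<in>A. a u * x u)"
  assume "\<not> ?thesis"
  then have above: "\<And>u. u \<in> A \<Longrightarrow> 0 < x u \<Longrightarrow> S < a u"
    by (auto simp: S_def not_le)
  obtain u0 where "u0 \<in> A" "0 < x u0"
    using assms(2,3) sum_nonpos[of A x] by (metis less_eq_real_def not_le zero_less_one)
  have "(\<Sum>u\<in>A. S * x u) < (\<Sum>u\<in>A. a u * x u)"
  proof (rule sum_strict_mono_ex1[OF assms(1)])
    show "\<forall>u\<in>A. S * x u \<le> a u * x u"
      using above assms(2) by (metis less_eq_real_def mult_right_mono mult_zero_right)
    show "\<exists>u\<in>A. S * x u < a u * x u"
      using \<open>u0 \<in> A\<close> \<open>0 < x u0\<close> above by (auto intro!: bexI[of _ u0])
  qed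
  then show False
    using assms(3) by (simp add: S_def flip: sum_distrib_left)
qed

lemma weight_of_far_points_le:
  fixes a x :: "'a \<Rightarrow> real"
  assumes "finite A" "B \<subseteq> A" "\<forall>u\<in>A. 0 \<le> x u \<and> 0 \<le> a u" "0 < t"
    and far: "\<forall>u\<in>B. t * (\<Sum>u\<in>A. a u * x u) < a u"
  shows "t * (\<Sum>u\<in>B. x u) \<le> 1"
proof -
  define S where "S = (\<Sum>u\<in>A. a u * x u)"
  have S_B: "(\<Sum>u\<in>B. a u * x u) \<le> S"
    unfolding S_def using assms(1-3) by (intro sum_mono2) auto
  show ?thesis
  proof (cases "S = 0")
    case True
    have "\<forall>u\<in>A. a u * x u = 0"
      using True assms(1,3) by (simp add: S_def sum_nonneg_eq_0_iff)
    moreover have "\<forall>u\<in>B. 0 < a u"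
      using far True by (simp add: S_def)
    ultimately have "\<forall>u\<in>B. x u = 0"
      using assms(2) by (metis less_irrefl mult_eq_0_iff subsetD)
    then show ?thesis by simp
  next
    case False
    moreover have "0 \<le> S"
      unfolding S_def using assms(3) by (intro sum_nonneg) auto
    ultimately have "0 < S" by simp
    have "(\<Sum>u\<in>B. t * S * x u) \<le> (\<Sum>u\<in>B. a u * x u)"
      using far assms(2,3) by (intro sum_mono mult_right_mono) (auto simp: S_def)
    then have "S * (t * (\<Sum>u\<in>B. x u)) \<le> S * 1"
      using S_B by (simp add: sum_distrib_left mult_ac)
    then show ?thesis
      using \<open>0 < S\<close> by simp
  qed
qed

lemma exists_capped_completion:
  fixes a y :: "'a \<Rightarrow> real"
  assumes "finite F" "A \<subseteq> F" "B \<subseteq> F" "A \<inter> B = {}" "\<forall>u\<in>F. 0 \<le> y u"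
    and "(\<Sum>u\<in>A. y u) \<le> 1" "1 - (\<Sum>u\<in>A. y u) \<le> (\<Sum>u\<in>B. y u)"
    and "\<forall>u\<in>B. a u \<le> M"
  shows "\<exists>z. (\<Sum>u\<in>F. z u) = 1 \<and> (\<forall>u\<in>F. 0 \<le> z u \<and> z u \<le> y u)
    \<and> (\<Sum>u\<in>F. a u * z u) \<le> (\<Sum>u\<in>A. a u * y u) + M * (1 - (\<Sum>u\<in>A. y u))"
proof -
  define s t where "s = (\<Sum>u\<in>A. y u)" and "t = (\<Sum>u\<in>B. y u)"
  define k where "k = (1 - s) / t"
  have k: "0 \<le> k" "k \<le> 1" "k * t = 1 - s"
    using assms(6,7) unfolding k_def s_def t_def by (auto simp: divide_le_eq)
  define z where "z = (\<lambda>u. if u \<in> A then y u else if u \<in> B then k * y u else 0)"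
  have split: "(\<Sum>u\<in>F. g u * z u) = (\<Sum>u\<in>A. g u * y u) + k * (\<Sum>u\<in>B. g u * y u)" for g
  proof -
    have "(\<Sum>u\<in>F. g u * z u)
        = (\<Sum>u\<in>F. (if u \<in> A then g u * y u else 0) + (if u \<in> B then k * (g u * y u) else 0))"
      using assms(4) by (intro sum.cong) (auto simp: z_def)
    also have "\<dots> = (\<Sum>u\<in>A. g u * y u) + (\<Sum>u\<in>B. k * (g u * y u))"
      using assms(1-3) by (simp add: sum.distrib sum.inter_restrict[symmetric] Int_absorb1)
    finally show ?thesis
      by (simp add: sum_distrib_left)
  qed
  have "(\<Sum>u\<in>F. z u) = 1"
    using split[of "\<lambda>_. 1"] k by (simp add: s_def t_def)
  moreover have "\<forall>u\<in>F. 0 \<le> z u \<and> z u \<le> y u"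
    using assms(5) k by (auto simp: z_def intro: mult_left_le_one_le)
  moreover have "k * (\<Sum>u\<in>B. a u * y u) \<le> M * (1 - s)"
  proof -
    have "(\<Sum>u\<in>B. a u * y u) \<le> (\<Sum>u\<in>B. M * y u)"
      using assms(3,5,8) by (intro sum_mono mult_right_mono) auto
    then have "k * (\<Sum>u\<in>B. a u * y u) \<le> k * (M * t)"
      using k(1) by (simp add: t_def sum_distrib_left[symmetric] mult_left_mono)
    also have "\<dots> = M * (1 - s)"
      using k(3) by (simp add: mult_ac)
    finally show ?thesis .
  qed
  ultimately show ?thesis
    using split[of a] unfolding s_def by (intro exI[of _ z]) linarith
qed

lemma sum_bounded_outside_le:
  fixes a x :: "'a \<Rightarrow> real"
  assumes "finite F" "G \<subseteq> F" "\<forall>u\<in>F. 0 \<le> x u \<and> 0 \<le> a u" "1 \<le> K"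
    and "\<forall>u\<in>F - G. g \<le> a u"
  shows "(\<Sum>u\<in>G. a u * x u) + K * g * (\<Sum>u\<in>F - G. x u) \<le> K * (\<Sum>u\<in>F. a u * x u)"
proof -
  have "0 \<le> (\<Sum>u\<in>G. a u * x u)"
    using assms(2,3) by (intro sum_nonneg) auto
  then have "(\<Sum>u\<in>G. a u * x u) \<le> K * (\<Sum>u\<in>G. a u * x u)"
    using mult_right_mono[OF assms(4)] by simp
  moreover have "K * g * (\<Sum>u\<in>F - G. x u) \<le> K * (\<Sum>u\<in>F - G. a u * x u)"
    unfolding sum_distrib_left mult.assoc using assms(3,4,5)
    by (intro sum_mono mult_left_mono mult_right_mono) auto
  ultimately show ?thesis
    using sum.subset_diff[OF assms(2,1), of "\<lambda>u. a u * x u"] by (simp add: algebra_simps)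
qed

locale clustered_instance =
  fixes P F P' :: "'a set" and d :: "'a \<Rightarrow> 'a \<Rightarrow> real" and p :: real
    and x :: "'a \<Rightarrow> 'a \<Rightarrow> real" and near :: "'a \<Rightarrow> 'a"
  assumes metric: "metric_on (P \<union> F) d"
    and p_ge_1: "1 \<le> p"
    and x_nonneg: "\<And>v u. v \<in> P \<Longrightarrow> u \<in> F \<Longrightarrow> 0 \<le> x v u"
    and x_sum_eq_1: "\<And>v. v \<in> P \<Longrightarrow> (\<Sum>u\<in>F. x v u) = 1"
    and P'_subset: "P' \<subseteq> P"
    and P'_separated: "\<And>v v'. v \<in> P' \<Longrightarrow> v' \<in> P' \<Longrightarrow> v \<noteq> v'
      \<Longrightarrow> 2 powr ((p + 1) / p) * Rad F d p x v < d v v'"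
    and P'_two: "\<exists>v\<in>P'. \<exists>v'\<in>P'. v \<noteq> v'"
    and nearest: "nearest_map F P' d near"
begin

abbreviation "R \<equiv> Rad F d p x"
abbreviation "c \<equiv> 2 powr (1 / p)"
abbreviation "Fc \<equiv> Fcl F near"
abbreviation "G \<equiv> Gcl F near d"
abbreviation "Fp \<equiv> Fpr F near d p x"
abbreviation "\<gamma> \<equiv> gam F near d"

lemma finite_P: "finite P" and finite_F: "finite F"
  using metric by (auto simp: metric_on_def)

lemma dist_nonneg: "a \<in> P \<union> F \<Longrightarrow> b \<in> P \<union> F \<Longrightarrow> 0 \<le> d a b"
  and dist_commute: "a \<in> P \<union> F \<Longrightarrow> b \<in> P \<union> F \<Longrightarrow> d a b = d b a"
  and dist_triangle: "a \<in> P \<union> F \<Longrightarrow> b \<in> P \<union> F \<Longrightarrow> e \<in> P \<union> F \<Longrightarrow> d a e \<le> d a b + d b e"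
  using metric unfolding metric_on_def by blast+

lemma p_pos: "0 < p"
  using p_ge_1 by simp

lemma Rad_nonneg: "0 \<le> R v"
  by (simp add: Rad_def)

lemma Rad_powr: "v \<in> P \<Longrightarrow> R v powr p = (\<Sum>u\<in>F. d v u powr p * x v u)"
  using p_pos x_nonneg by (simp add: Rad_def powr_powr sum_nonneg)

lemma c_ge_1: "1 \<le> c"
  using p_pos by (intro ge_one_powr_ge_zero) auto

lemma c_powr: "c powr p = 2"
  using p_pos by (simp add: powr_powr)

lemma separated:
  assumes "v \<in> P'" "v' \<in> P'" "v \<noteq> v'"
  shows "2 * c * R v < d v v'"
proof -
  have "(p + 1) / p = 1 + 1 / p"
    using p_pos by (simp add: field_simps)
  then have "2 powr ((p + 1) / p) = 2 * c"
    by (simp add: powr_add)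
  then show ?thesis
    using P'_separated[OF assms] by simp
qed

lemma exists_other_client: "v \<in> P' \<Longrightarrow> \<exists>v'\<in>P'. v' \<noteq> v"
  using P'_two by metis

lemma exists_close_facility:
  assumes "v \<in> P"
  shows "\<exists>u\<in>F. 0 < x v u \<and> d v u \<le> R v"
proof -
  obtain u where u: "u \<in> F" "0 < x v u" "d v u powr p \<le> R v powr p"
    using exists_le_weighted_average[OF finite_F, where x = "x v" and a = "\<lambda>u. d v u powr p"]
      x_nonneg x_sum_eq_1 assms Rad_powr by auto
  have "d v u \<le> R v"
    using powr_less_mono2[OF p_pos Rad_nonneg[of v], where y = "d v u"] u(3) by fastforce
  with u show ?thesis by blast
qed

lemma near_in: "u \<in> F \<Longrightarrow> near u \<in> P'"
  and near_le: "u \<in> F \<Longrightarrow> v \<in> P' \<Longrightarrow> d u (near u) \<le> d u v"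
  using nearest unfolding nearest_map_def by auto

lemma Fcl_subset: "Fc v \<subseteq> F"
  and Gcl_subset_Fcl: "G v \<subseteq> Fc v"
  and Fpr_subset_Fcl: "Fp v \<subseteq> Fc v"
  by (auto simp: Fcl_def Gcl_def Fpr_def)

lemma Fcl_disjoint: "v \<noteq> v' \<Longrightarrow> Fc v \<inter> Fc v' = {}"
  by (auto simp: Fcl_def)

lemma dist_outside_cluster:
  assumes "v \<in> P'" "u \<in> F - Fc v"
  shows "c * R v < d v u"
proof -
  have nu: "near u \<in> P'" "near u \<noteq> v"
    using assms near_in by (auto simp: Fcl_def)
  then have mem: "v \<in> P \<union> F" "near u \<in> P \<union> F" "u \<in> P \<union> F"
    using assms P'_subset by auto
  have "2 * c * R v < d v (near u)"
    using separated[OF assms(1) nu(1)] nu(2) by simp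
  also have "\<dots> \<le> d v u + d u (near u)"
    using dist_triangle mem by blast
  also have "\<dots> \<le> 2 * d v u"
    using near_le[of u v] assms dist_commute mem by simp
  finally show ?thesis by simp
qed

lemma outside_cluster_nonempty:
  assumes "v \<in> P'"
  shows "F - Fc v \<noteq> {}"
proof -
  obtain v' where v': "v' \<in> P'" "v' \<noteq> v"
    using exists_other_client[OF assms] by blast
  obtain u where u: "u \<in> F" "d v' u \<le> R v'"
    using exists_close_facility v' P'_subset by blast
  have "u \<notin> Fc v"
  proof
    assume "u \<in> Fc v"
    then have "d u v \<le> d u v'"
      using near_le[OF u(1) v'(1)] by (simp add: Fcl_def)
    have mem: "v \<in> P \<union> F" "v' \<in> P \<union> F" "u \<in> P \<union> F"
      using assms v' u P'_subset by auto
    have "d v' v \<le> d v' u + d u v"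
      using dist_triangle mem by blast
    also have "\<dots> \<le> 2 * R v'"
      using \<open>d u v \<le> d u v'\<close> u(2) dist_commute mem by simp
    also have "\<dots> \<le> 2 * c * R v'"
      using c_ge_1 Rad_nonneg[of v'] by (simp add: mult_right_mono)
    finally show False
      using separated[OF v'(1) assms v'(2)] by simp
  qed
  then show ?thesis
    using u by blast
qed

lemma gam_le: "u \<in> F - Fc v \<Longrightarrow> \<gamma> v \<le> d v u"
  unfolding gam_def using finite_F by (intro Min_le) auto

lemma gam_attained:
  assumes "v \<in> P'"
  shows "\<exists>u\<in>F - Fc v. d v u = \<gamma> v"
proof -
  have "\<gamma> v \<in> d v ` (F - Fc v)"
    unfolding gam_def using finite_F outside_cluster_nonempty[OF assms] by (intro Min_in) auto
  then show ?thesis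
    by (auto simp: eq_commute)
qed

lemma gam_gt: "v \<in> P' \<Longrightarrow> c * R v < \<gamma> v"
  using gam_attained dist_outside_cluster by fastforce

lemma gam_nonneg:
  assumes "v \<in> P'"
  shows "0 \<le> \<gamma> v"
proof -
  have "0 \<le> c * R v"
    using c_ge_1 Rad_nonneg[of v] by simp
  with gam_gt[OF assms] show ?thesis by simp
qed

lemma close_in_Fpr:
  assumes "v \<in> P'" "u \<in> F" "d v u \<le> c * R v"
  shows "u \<in> Fp v"
proof -
  have "u \<in> Fc v"
    using dist_outside_cluster[OF assms(1)] assms(2,3) by force
  moreover have "d u v = d v u"
    using dist_commute assms(1,2) P'_subset by auto
  ultimately show ?thesis
    using assms(3) by (simp add: Fpr_def)
qed

lemma Fpr_subset_Gcl: "v \<in> P' \<Longrightarrow> Fp v \<subseteq> G v"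
  using gam_gt[of v] dist_commute P'_subset Fcl_subset[of v]
  by (fastforce simp: Fpr_def Gcl_def)

lemma Fpr_mass:
  assumes "v \<in> P'"
  shows "1 / 2 \<le> (\<Sum>u\<in>Fp v. x v u)"
proof -
  have v: "v \<in> P"
    using assms P'_subset by blast
  have far: "2 * (\<Sum>u\<in>F. d v u powr p * x v u) < d v u powr p" if "u \<in> F - Fp v" for u
  proof -
    have "c * R v < d v u"
      using close_in_Fpr[OF assms] that by force
    then have "(c * R v) powr p < d v u powr p"
      using p_pos c_ge_1 Rad_nonneg[of v] by (intro powr_less_mono2) auto
    moreover have "(c * R v) powr p = 2 * (\<Sum>u\<in>F. d v u powr p * x v u)"
      using c_ge_1 Rad_nonneg[of v] c_powr Rad_powr[OF v] by (simp add: powr_mult)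
    ultimately show ?thesis by simp
  qed
  have "2 * (\<Sum>u\<in>F - Fp v. x v u) \<le> 1"
    using weight_of_far_points_le[OF finite_F, where x = "x v" and a = "\<lambda>u. d v u powr p"]
      far x_nonneg[OF v] by auto
  moreover have "(\<Sum>u\<in>F. x v u) = (\<Sum>u\<in>F - Fp v. x v u) + (\<Sum>u\<in>Fp v. x v u)"
    using Fpr_subset_Fcl Fcl_subset finite_F by (intro sum.subset_diff) blast
  ultimately show ?thesis
    using x_sum_eq_1[OF v] by simp
qed

lemma neighbour_core_within_3_gam:
  assumes "v \<in> P'"
  shows "\<exists>v'\<in>P'. v' \<noteq> v \<and> (\<forall>u\<in>Fp v'. d v u \<le> 3 * \<gamma> v)"
proof -
  obtain a where a: "a \<in> F" "a \<notin> Fc v" "d v a = \<gamma> v"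
    using gam_attained[OF assms] by blast
  define v' where "v' = near a"
  have v': "v' \<in> P'" "v' \<noteq> v"
    using a near_in by (auto simp: v'_def Fcl_def)
  have mem: "v \<in> P \<union> F" "v' \<in> P \<union> F" "a \<in> P \<union> F"
    using assms v' a P'_subset by auto
  have "d a v' \<le> d a v"
    using near_le[OF a(1) assms] by (simp add: v'_def)
  then have "d a v' \<le> \<gamma> v"
    using a(3) dist_commute mem by simp
  have "2 * c * R v' < d v' v"
    using separated[OF v'(1) assms v'(2)] .
  also have "\<dots> \<le> d v' a + d a v"
    using dist_triangle mem by blast
  also have "\<dots> \<le> 2 * \<gamma> v"
    using \<open>d a v' \<le> \<gamma> v\<close> a(3) dist_commute mem by simp
  finally have "c * R v' < \<gamma> v" by simp
  have "d v u \<le> 3 * \<gamma> v" if "u \<in> Fp v'" for u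
  proof -
    have u: "u \<in> F" "d u v' \<le> c * R v'"
      using that Fpr_subset_Fcl Fcl_subset by (auto simp: Fpr_def)
    then have "u \<in> P \<union> F" by simp
    then have "d v u \<le> d v a + d a v' + d v' u"
      using dist_triangle[of v a u] dist_triangle[of a v' u] mem by fastforce
    then show ?thesis
      using a(3) \<open>d a v' \<le> \<gamma> v\<close> \<open>c * R v' < \<gamma> v\<close> u(2) dist_commute mem \<open>u \<in> P \<union> F\<close>
      by simp
  qed
  with v' show ?thesis by blast
qed

definition clustered_opening :: "'a \<Rightarrow> real" where
  "clustered_opening u =
    (if \<exists>v\<in>P'. u \<in> G v then x (THE v. v \<in> P' \<and> u \<in> G v) u else 0)"

lemma clustered_opening_eq:
  assumes "v \<in> P'" "u \<in> G v"
  shows "clustered_opening u = x v u"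
proof -
  have "(THE v. v \<in> P' \<and> u \<in> G v) = v"
  proof (rule the_equality)
    show "v \<in> P' \<and> u \<in> G v"
      using assms by simp
    show "v' = v" if "v' \<in> P' \<and> u \<in> G v'" for v'
      using that assms(2) Gcl_subset_Fcl Fcl_disjoint[of v' v] by blast
  qed
  then show ?thesis
    using assms by (auto simp: clustered_opening_def)
qed

lemma clustered_opening_nonneg: "0 \<le> clustered_opening u"
proof (cases "\<exists>v\<in>P'. u \<in> G v")
  case True
  then obtain v where "v \<in> P'" "u \<in> G v" by blast
  then show ?thesis
    using clustered_opening_eq x_nonneg P'_subset Gcl_subset_Fcl Fcl_subset by (metis subsetD)
qed (simp add: clustered_opening_def)

lemma clustered_opening_le:
  assumes "u \<in> F" "\<forall>v\<in>P. x v u \<le> y u"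
  shows "clustered_opening u \<le> y u"
proof (cases "\<exists>v\<in>P'. u \<in> G v")
  case True
  then obtain v where "v \<in> P'" "u \<in> G v" by blast
  then show ?thesis
    using clustered_opening_eq assms(2) P'_subset by auto
next
  case False
  obtain v where "v \<in> P'"
    using P'_two by blast
  then have "0 \<le> y u"
    using assms x_nonneg P'_subset by (meson order.trans subsetD)
  with False show ?thesis
    by (simp add: clustered_opening_def)
qed

lemma Gcl_opening_sum:
  "v \<in> P' \<Longrightarrow> (\<Sum>u\<in>G v. clustered_opening u) = (\<Sum>u\<in>G v. x v u)"
  using clustered_opening_eq by simp

lemma Gcl_opening_sum_le_1:
  assumes "v \<in> P'"
  shows "(\<Sum>u\<in>G v. clustered_opening u) \<le> 1"
proof -
  have "(\<Sum>u\<in>G v. x v u) \<le> (\<Sum>u\<in>F. x v u)"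
    using finite_F Gcl_subset_Fcl Fcl_subset x_nonneg assms P'_subset
    by (intro sum_mono2) blast+
  then show ?thesis
    using Gcl_opening_sum x_sum_eq_1 assms P'_subset by auto
qed

lemma Fpr_opening_mass:
  assumes "v \<in> P'"
  shows "1 / 2 \<le> (\<Sum>u\<in>Fp v. clustered_opening u)"
  using Fpr_mass[OF assms] clustered_opening_eq[OF assms] Fpr_subset_Gcl[OF assms]
  by (simp add: subset_iff)

definition service_bound :: "'a \<Rightarrow> real" where
  "service_bound v = (\<Sum>u\<in>G v. d v u powr p * clustered_opening u)
     + 3 powr p * \<gamma> v powr p * (1 - (\<Sum>u\<in>G v. clustered_opening u))"

lemma exists_cheap_reassignment:
  assumes "v \<in> P'"
  shows "\<exists>z. (\<Sum>u\<in>F. z u) = 1 \<and> (\<forall>u\<in>F. 0 \<le> z u \<and> z u \<le> clustered_opening u)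
    \<and> (\<Sum>u\<in>F. d v u powr p * z u) \<le> service_bound v"
proof -
  obtain v' where v': "v' \<in> P'" "v' \<noteq> v" "\<forall>u\<in>Fp v'. d v u \<le> 3 * \<gamma> v"
    using neighbour_core_within_3_gam[OF assms] by blast
  have GF: "G v \<subseteq> F" and FpF: "Fp v' \<subseteq> F"
    using Gcl_subset_Fcl Fpr_subset_Fcl Fcl_subset by blast+
  have disjoint: "G v \<inter> Fp v' = {}"
    using Gcl_subset_Fcl Fpr_subset_Fcl Fcl_disjoint[OF v'(2)[symmetric]] by blast
  have "(\<Sum>u\<in>Fp v. clustered_opening u) \<le> (\<Sum>u\<in>G v. clustered_opening u)"
    using Fpr_subset_Gcl[OF assms] GF finite_F clustered_opening_nonneg
    by (intro sum_mono2) (auto intro: finite_subset)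
  then have deficit: "1 - (\<Sum>u\<in>G v. clustered_opening u) \<le> (\<Sum>u\<in>Fp v'. clustered_opening u)"
    using Fpr_opening_mass[OF v'(1)] Fpr_opening_mass[OF assms] by linarith
  have far_bound: "\<forall>u\<in>Fp v'. d v u powr p \<le> (3 * \<gamma> v) powr p"
  proof
    fix u assume "u \<in> Fp v'"
    moreover have "v \<in> P \<union> F"
      using assms P'_subset by blast
    ultimately show "d v u powr p \<le> (3 * \<gamma> v) powr p"
      using v'(3) FpF p_pos dist_nonneg[of v u] by (intro powr_mono2) auto
  qed
  have "(3 * \<gamma> v) powr p = 3 powr p * \<gamma> v powr p"
    using gam_nonneg[OF assms] by (simp add: powr_mult)
  then show ?thesis
    using exists_capped_completion[OF finite_F GF FpF disjoint _ Gcl_opening_sum_le_1[OF assms]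
        deficit far_bound] clustered_opening_nonneg
    by (simp add: service_bound_def)
qed

lemma service_bound_le:
  assumes "v \<in> P'"
  shows "service_bound v \<le> 3 powr p * R v powr p"
proof -
  have v: "v \<in> P"
    using assms P'_subset by blast
  have GF: "G v \<subseteq> F"
    using Gcl_subset_Fcl Fcl_subset by blast
  have "1 - (\<Sum>u\<in>G v. clustered_opening u) = (\<Sum>u\<in>F - G v. x v u)"
    using Gcl_opening_sum[OF assms] sum.subset_diff[OF GF finite_F, of "x v"] x_sum_eq_1[OF v]
    by simp
  moreover have "\<forall>u\<in>F - G v. \<gamma> v powr p \<le> d v u powr p"
  proof
    fix u assume u: "u \<in> F - G v"
    then have "\<gamma> v \<le> d v u"
      using gam_le[of u v] by (cases "u \<in> Fc v") (auto simp: Gcl_def)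
    then show "\<gamma> v powr p \<le> d v u powr p"
      using gam_nonneg[OF assms] p_pos by (intro powr_mono2) auto
  qed
  ultimately show ?thesis
    using sum_bounded_outside_le[OF finite_F GF, where x = "x v" and a = "\<lambda>u. d v u powr p"
        and K = "3 powr p" and g = "\<gamma> v powr p"]
      x_nonneg[OF v] ge_one_powr_ge_zero[of 3 p] p_pos Rad_powr[OF v]
      clustered_opening_eq[OF assms]
    by (simp add: service_bound_def mult.assoc)
qed

lemma lp_cost_le_Tval:
  assumes opt: "optimal_assignment F P d p clustered_opening \<omega> x'"
    and \<omega>_nonneg: "\<forall>v\<in>P. 0 \<le> \<omega> v" and \<omega>_outside: "\<forall>v\<in>P - P'. \<omega> v = 0"
  shows "lp_cost F P f d p \<omega> x' clustered_opening \<le> Tval F P' f d p \<omega> near clustered_opening"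
proof -
  have "\<forall>v\<in>P'. \<exists>z. (\<Sum>u\<in>F. z u) = 1 \<and> (\<forall>u\<in>F. 0 \<le> z u \<and> z u \<le> clustered_opening u)
      \<and> (\<Sum>u\<in>F. d v u powr p * z u) \<le> service_bound v"
    using exists_cheap_reassignment by blast
  then obtain z where z: "\<forall>v\<in>P'. (\<Sum>u\<in>F. z v u) = 1
      \<and> (\<forall>u\<in>F. 0 \<le> z v u \<and> z v u \<le> clustered_opening u)
      \<and> (\<Sum>u\<in>F. d v u powr p * z v u) \<le> service_bound v"
    by (rule bchoice[THEN exE])
  obtain v0 where v0: "v0 \<in> P'"
    using P'_two by blast
  define X where "X v = (if v \<in> P' then z v else z v0)" for v
  have X_row: "(\<Sum>u\<in>F. X v u) = 1 \<and> (\<forall>u\<in>F. 0 \<le> X v u \<and> X v u \<le> clustered_opening u)" for v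
  proof -
    have "X v = z (if v \<in> P' then v else v0)" "(if v \<in> P' then v else v0) \<in> P'"
      using v0 by (simp_all add: X_def)
    then show ?thesis
      using z by simp
  qed
  then have "assign_feasible F P clustered_opening X"
    by (simp add: assign_feasible_def)
  then have "assign_cost F P d p \<omega> x' \<le> assign_cost F P d p \<omega> X"
    using opt by (simp add: optimal_assignment_def)
  also have "\<dots> = (\<Sum>v\<in>P'. \<Sum>u\<in>F. \<omega> v * d v u powr p * X v u)"
    unfolding assign_cost_def using \<omega>_outside
    by (intro sum.mono_neutral_right[OF finite_P P'_subset]) simp
  also have "\<dots> = (\<Sum>v\<in>P'. \<omega> v * (\<Sum>u\<in>F. d v u powr p * z v u))"
    by (simp add: X_def sum_distrib_left mult.assoc)
  also have "\<dots> \<le> (\<Sum>v\<in>P'. \<omega> v * service_bound v)"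
    using z \<omega>_nonneg P'_subset by (intro sum_mono mult_left_mono) auto
  finally show ?thesis
    by (simp add: lp_cost_def assign_cost_def Tval_def service_bound_def)
qed

lemma weighted_service_bound_le:
  assumes "\<forall>v\<in>P. 0 \<le> \<omega> v" "\<forall>v\<in>P - P'. \<omega> v = 0"
  shows "(\<Sum>v\<in>P'. \<omega> v * service_bound v) \<le> 3 powr p * (\<Sum>v\<in>P. \<omega> v * R v powr p)"
proof -
  have "(\<Sum>v\<in>P'. \<omega> v * service_bound v) \<le> (\<Sum>v\<in>P'. 3 powr p * (\<omega> v * R v powr p))"
  proof (rule sum_mono)
    fix v assume "v \<in> P'"
    then have "\<omega> v * service_bound v \<le> \<omega> v * (3 powr p * R v powr p)"
      using service_bound_le assms(1) P'_subset by (intro mult_left_mono) auto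
    then show "\<omega> v * service_bound v \<le> 3 powr p * (\<omega> v * R v powr p)"
      by (simp add: mult.left_commute)
  qed
  also have "\<dots> = 3 powr p * (\<Sum>v\<in>P'. \<omega> v * R v powr p)"
    by (simp add: sum_distrib_left)
  also have "\<dots> = 3 powr p * (\<Sum>v\<in>P. \<omega> v * R v powr p)"
    using sum.mono_neutral_left[OF finite_P P'_subset, of "\<lambda>v. \<omega> v * R v powr p"] assms(2)
    by simp
  finally show ?thesis .
qed

lemma Tval_le_lp_cost:
  assumes f_nonneg: "\<forall>u\<in>F. 0 \<le> f u" and x_le_y: "\<forall>u\<in>F. \<forall>v\<in>P. x v u \<le> y u"
    and "\<forall>v\<in>P. 0 \<le> \<omega> v" "\<forall>v\<in>P - P'. \<omega> v = 0"
    and potential: "(\<Sum>v\<in>P. \<omega> v * R v powr p) \<le> (\<Sum>v\<in>P. w v * R v powr p)"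
  shows "Tval F P' f d p \<omega> near clustered_opening \<le> 3 powr p * lp_cost F P f d p w x y"
proof -
  have "(\<Sum>v\<in>P'. \<omega> v * service_bound v) \<le> 3 powr p * (\<Sum>v\<in>P. \<omega> v * R v powr p)"
    using weighted_service_bound_le assms(3,4) .
  also have "\<dots> \<le> 3 powr p * (\<Sum>v\<in>P. w v * R v powr p)"
    using potential by simp
  also have "\<dots> = 3 powr p * (\<Sum>v\<in>P. \<Sum>u\<in>F. w v * d v u powr p * x v u)"
    using Rad_powr by (simp add: sum_distrib_left mult.assoc)
  finally have clients: "(\<Sum>v\<in>P'. \<omega> v * service_bound v)
      \<le> 3 powr p * (\<Sum>v\<in>P. \<Sum>u\<in>F. w v * d v u powr p * x v u)" .
  have "\<forall>u\<in>F. 0 \<le> y u"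
    using clustered_opening_nonneg clustered_opening_le x_le_y by (meson order.trans)
  then have "0 \<le> (\<Sum>u\<in>F. f u * y u)"
    using f_nonneg by (intro sum_nonneg mult_nonneg_nonneg) auto
  then have "(\<Sum>u\<in>F. f u * y u) \<le> 3 powr p * (\<Sum>u\<in>F. f u * y u)"
    using mult_right_mono[OF ge_one_powr_ge_zero[of 3 p]] p_pos by simp
  moreover have "(\<Sum>u\<in>F. f u * clustered_opening u) \<le> (\<Sum>u\<in>F. f u * y u)"
    using f_nonneg x_le_y clustered_opening_le by (intro sum_mono mult_left_mono) auto
  ultimately show ?thesis
    using clients by (simp add: Tval_def service_bound_def lp_cost_def distrib_left)
qed

lemma clustered_opening_rank_le:
  assumes "lp_feasible F P indep x y" "S \<subseteq> F"
  shows "(\<Sum>u\<in>S. clustered_opening u) \<le> real (mrank indep S)"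
proof -
  have "(\<Sum>u\<in>S. clustered_opening u) \<le> (\<Sum>u\<in>S. y u)"
    using assms clustered_opening_le by (intro sum_mono) (auto simp: lp_feasible_def)
  also have "\<dots> \<le> real (mrank indep S)"
    using assms by (simp add: lp_feasible_def)
  finally show ?thesis .
qed

lemma clustered_opening_in_polytope:
  assumes "lp_feasible F P indep x y"
  shows "polyP F P' indep d p x near clustered_opening"
  using clustered_opening_nonneg clustered_opening_rank_le[OF assms]
    Fpr_opening_mass Gcl_opening_sum_le_1
  by (simp add: polyP_def)

end

lemma card_ge_2_ex_distinct:
  assumes "finite A" "2 \<le> card A"
  shows "\<exists>a\<in>A. \<exists>b\<in>A. a \<noteq> b"
  using assms card_le_Suc0_iff_eq[OF assms(1)] by fastforce

lemma clustered_instance_from_consolidation: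
  assumes "1 \<le> p" "metric_on (P \<union> F) d" "\<forall>v\<in>P. 0 \<le> w v" "lp_feasible F P indep x y"
    and "\<forall>v\<in>P. (\<Sum>u\<in>F. x v u) = 1" "client_consolidation P F d p x w w'"
    and "P' = {v\<in>P. w' v \<noteq> 0}" "2 \<le> card P'" "nearest_map F P' d near"
  shows "clustered_instance P F P' d p x near"
proof
  have sym: "\<forall>a\<in>P. \<forall>b\<in>P. d a b = d b a"
    using assms(2) by (simp add: metric_on_def)
  have pos: "0 < w' v" if "v \<in> P'" for v
    using client_consolidation_nonneg[OF assms(6,3)] that assms(7) by (simp add: less_le)
  show "2 powr ((p + 1) / p) * Rad F d p x v < d v v'"
    if "v \<in> P'" "v' \<in> P'" "v \<noteq> v'" for v v'
    using client_consolidation_separated[OF assms(6) sym _ _ that(3) pos pos] that assms(7) by blast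
  have "finite P"
    using assms(2) by (simp add: metric_on_def)
  then show "\<exists>v\<in>P'. \<exists>v'\<in>P'. v \<noteq> v'"
    using card_ge_2_ex_distinct[OF _ assms(8)] assms(7) by simp
qed (use assms in \<open>auto simp: lp_feasible_def\<close>)

theorem mainTheorem15:
  fixes P F P' :: "'a set" and d :: "'a \<Rightarrow> 'a \<Rightarrow> real" and p :: real
    and f w w' y y' :: "'a \<Rightarrow> real" and indep :: "'a set \<Rightarrow> bool"
    and x x' :: "'a \<Rightarrow> 'a \<Rightarrow> real" and near :: "'a \<Rightarrow> 'a"
  assumes p: "p \<ge> 1"
    and finP: "finite P" and finF: "finite F"
    and metric: "metric_on (P \<union> F) d"
    and f_nonneg: "\<forall>u\<in>F. f u \<ge> 0"
    and w_nonneg: "\<forall>v\<in>P. w v \<ge> 0"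
    and matroid: "matroid F indep"
    and xy_feas: "lp_feasible F P indep x y"
    and xy_opt: "\<forall>x2 y2. lp_feasible F P indep x2 y2 \<longrightarrow> lp_cost F P f d p w x y \<le> lp_cost F P f d p w x2 y2"
    and x_sum1: "\<forall>v\<in>P. (\<Sum>u\<in>F. x v u) = 1"
    and consol: "client_consolidation P F d p x w w'"
    and P'_def: "P' = {v\<in>P. w' v \<noteq> 0}"
    and P'_card: "card P' \<ge> 2"
    and near: "nearest_map F P' d near"
    and y'_def: "y' = (\<lambda>u. if \<exists>v\<in>P'. u \<in> Gcl F near d v
                           then x (THE v. v \<in> P' \<and> u \<in> Gcl F near d v) u else 0)"
    and x'_opt: "optimal_assignment F P d p y' w' x'"
  shows "polyP F P' indep d p x near y'
       \<and> lp_feasible F P indep x' y'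
       \<and> lp_cost F P f d p w' x' y' \<le> Tval F P' f d p w' near y'
       \<and> Tval F P' f d p w' near y' \<le> 3 powr p * lp_cost F P f d p w x y"
proof -
  interpret clustered_instance P F P' d p x near
    using clustered_instance_from_consolidation[OF p metric w_nonneg xy_feas x_sum1 consol
        P'_def P'_card near] .
  have y': "y' = clustered_opening"
    by (simp add: y'_def clustered_opening_def fun_eq_iff)
  have w'_nonneg: "\<forall>v\<in>P. 0 \<le> w' v"
    using client_consolidation_nonneg[OF consol w_nonneg] .
  have w'_outside: "\<forall>v\<in>P - P'. w' v = 0"
    using P'_def by simp
  have x_le_y: "\<forall>u\<in>F. \<forall>v\<in>P. x v u \<le> y u"
    using xy_feas by (simp add: lp_feasible_def)
  have potential: "(\<Sum>v\<in>P. w' v * R v powr p) \<le> (\<Sum>v\<in>P. w v * R v powr p)"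
    using client_consolidation_potential_le[OF consol w_nonneg] p by simp
  have "lp_feasible F P indep x' y'"
    using x'_opt clustered_opening_rank_le[OF xy_feas]
    by (simp add: y' optimal_assignment_def assign_feasible_def lp_feasible_def)
  then show ?thesis
    using clustered_opening_in_polytope[OF xy_feas]
      lp_cost_le_Tval[OF x'_opt[unfolded y'] w'_nonneg w'_outside]
      Tval_le_lp_cost[OF f_nonneg x_le_y w'_nonneg w'_outside potential]
    by (simp add: y')
qed

end
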